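(* The set of all sampled networks with one hidden layer of arbitrary width and activation function $\tanh$ is dense in $C(\mathcal{X},\mathbb{R}^{N_2})$ with respect to the uniform norm on $\mathcal{X}$.
   Context: Input space: Euclidean norm and inner product on $\mathbb{R}^D$. For $A\subseteq\mathbb{R}^D$ let $d(z,A)=\inf_{a\in A}\|z-a\|$, $\mathrm{Med}(A)=\{z:\exists p\neq q\in A,\ \|p-z\|=\|q-z\|=d(z,A)\}$, reach $\tau_A=\inf_{a\in A}d(a,\mathrm{Med}(A))$. Let $\mathcal{X}'\subset\mathbb{R}^D$ be nonempty compact with $\tau_{\mathcal{X}'}>0$, fix $0<\epsilon_I<\min\{\tau_{\mathcal{X}'},1\}$, and $\mathcal{X}=\{x:d(x,\mathcal{X}')\le\epsilon_I\}$. With $\psi=\tanh$, $s_2=\frac{\ln3}{2}$, $s_1=2s_2$, a sampled tanh network with one hidden layer of $N_1$ neurons is $\Psi(x)=\sum_{i=1}^{N_1}w_{2,i}\psi(\langle w_{1,i},x\rangle-b_{1,i})-b_2$ where for each $i$ there are distinct $x^{(1)}_{0,i},x^{(2)}_{0,i}\in\mathcal{X}$ with $w_{1,i}=s_1\frac{x^{(2)}_{0,i}-x^{(1)}_{0,i}}{\|x^{(2)}_{0,i}-x^{(1)}_{0,i}\|^2}$ and $b_{1,i}=\langle w_{1,i},x^{(1)}_{0,i}\rangle+s_2$; the output parameters $w_{2,i},b_2\in\mathbb{R}^{N_2}$ are unrestricted. *)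

theory Defs
  imports "HOL-Analysis.Analysis"
begin

text \<open>Distance from a point to a set, with the convention that the infimum over the
  empty set is +infinity (needed so that sets with empty medial axis have infinite reach).\<close>
definition edist_set :: "'a::metric_space \<Rightarrow> 'a set \<Rightarrow> ereal" where
  "edist_set z A = (INF a\<in>A. ereal (dist z a))"

definition medial_axis :: "'a::metric_space set \<Rightarrow> 'a set" where
  "medial_axis A = {z. \<exists>p\<in>A. \<exists>q\<in>A. p \<noteq> q \<and>
      ereal (dist p z) = edist_set z A \<and> ereal (dist q z) = edist_set z A}"

definition reach :: "'a::metric_space set \<Rightarrow> ereal" where
  "reach A = (INF a\<in>A. edist_set a (medial_axis A))"

definition s2 :: real where "s2 = ln 3 / 2"
definition s1 :: real where "s1 = 2 * s2"

definition sampled_weight :: "'a::euclidean_space \<Rightarrow> 'a \<Rightarrow> 'a" where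
  "sampled_weight x1 x2 = (s1 / (norm (x2 - x1))^2) *\<^sub>R (x2 - x1)"

definition sampled_bias :: "'a::euclidean_space \<Rightarrow> 'a \<Rightarrow> real" where
  "sampled_bias x1 x2 = inner (sampled_weight x1 x2) x1 + s2"

definition sampled_tanh_net :: "'a::euclidean_space set \<Rightarrow> ('a \<Rightarrow> 'b::euclidean_space) \<Rightarrow> bool" where
  "sampled_tanh_net X Psi \<longleftrightarrow>
     (\<exists>(N1::nat) (x1::nat \<Rightarrow> 'a) (x2::nat \<Rightarrow> 'a) (w2::nat \<Rightarrow> 'b) (b2::'b).
        (\<forall>i<N1. x1 i \<in> X \<and> x2 i \<in> X \<and> x1 i \<noteq> x2 i) \<and>
        Psi = (\<lambda>x. (\<Sum>i<N1. tanh (inner (sampled_weight (x1 i) (x2 i)) x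
                                   - sampled_bias (x1 i) (x2 i)) *\<^sub>R w2 i) - b2))"

end

theory Submission
  imports Defs
begin

(* A sampled neuron built from y and y + r u (u a unit vector) is the ridge function
   x \<mapsto> tanh (s1 / r * (u \<bullet> x - u \<bullet> y) - s2). Every point c of X' carries the segment
   c + [-eps_I, eps_I] u inside X, so in the projection t = u \<bullet> x the neurons can be made arbitrarily
   steep around any point within eps_I of the projected X'. On the line one shows by continuous
   induction, moving c downwards, that h (max c t) is uniformly approximable for every continuous h:
   inside the projected set a staircase of steep neurons lowers c, and across a gap a single neuron
   anchored at the left end of the next component, corrected by the approximation already available
   above it, does. Hence every exp (v \<bullet> x) is approximable on X; these span an algebra that
   separates points, so Stone-Weierstrass gives all continuous real functions, and vector-valued f
   are approximated componentwise. *)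

section \<open>Sampled tanh networks\<close>

lemma sum_lessThan_add:
  fixes f :: "nat \<Rightarrow> 'b::comm_monoid_add"
  shows "(\<Sum>i<m + n. f i) = (\<Sum>i<m. f i) + (\<Sum>i<n. f (m + i))"
  by (induction n) (auto simp: add.assoc)

lemma sampled_tanh_netI:
  fixes x1 x2 :: "nat \<Rightarrow> 'a::euclidean_space" and w :: "nat \<Rightarrow> 'b::euclidean_space"
  assumes "\<forall>i<N. x1 i \<in> X \<and> x2 i \<in> X \<and> x1 i \<noteq> x2 i"
    and "Psi = (\<lambda>x. (\<Sum>i<N. tanh (inner (sampled_weight (x1 i) (x2 i)) x
                                   - sampled_bias (x1 i) (x2 i)) *\<^sub>R w i) - b)"
  shows "sampled_tanh_net X Psi"
  unfolding sampled_tanh_net_def using assms by blast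

lemma sampled_tanh_netE:
  fixes Psi :: "'a::euclidean_space \<Rightarrow> 'b::euclidean_space"
  assumes "sampled_tanh_net X Psi"
  obtains N :: nat and x1 x2 :: "nat \<Rightarrow> 'a" and w :: "nat \<Rightarrow> 'b" and b
  where "\<forall>i<N. x1 i \<in> X \<and> x2 i \<in> X \<and> x1 i \<noteq> x2 i"
    and "Psi = (\<lambda>x. (\<Sum>i<N. tanh (inner (sampled_weight (x1 i) (x2 i)) x
                                   - sampled_bias (x1 i) (x2 i)) *\<^sub>R w i) - b)"
  using assms unfolding sampled_tanh_net_def by blast

lemma sampled_tanh_net_add:
  fixes f g :: "'a::euclidean_space \<Rightarrow> 'b::euclidean_space"
  assumes "sampled_tanh_net X f" "sampled_tanh_net X g"
  shows "sampled_tanh_net X (\<lambda>x. f x + g x)"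
proof -
  obtain N :: nat and x1 x2 w b where A: "\<forall>i<N. x1 i \<in> X \<and> x2 i \<in> X \<and> x1 i \<noteq> x2 i"
    and f: "f = (\<lambda>x. (\<Sum>i<N. tanh (inner (sampled_weight (x1 i) (x2 i)) x
                                   - sampled_bias (x1 i) (x2 i)) *\<^sub>R w i) - b)"
    using assms(1) by (rule sampled_tanh_netE)
  obtain N' :: nat and y1 y2 w' b' where B: "\<forall>i<N'. y1 i \<in> X \<and> y2 i \<in> X \<and> y1 i \<noteq> y2 i"
    and g: "g = (\<lambda>x. (\<Sum>i<N'. tanh (inner (sampled_weight (y1 i) (y2 i)) x
                                   - sampled_bias (y1 i) (y2 i)) *\<^sub>R w' i) - b')"
    using assms(2) by (rule sampled_tanh_netE)
  define z1 where "z1 i = (if i < N then x1 i else y1 (i - N))" for i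
  define z2 where "z2 i = (if i < N then x2 i else y2 (i - N))" for i
  define v where "v i = (if i < N then w i else w' (i - N))" for i
  define neuron where "neuron i x = tanh (inner (sampled_weight (z1 i) (z2 i)) x
                                   - sampled_bias (z1 i) (z2 i)) *\<^sub>R v i" for i x
  have "(\<lambda>x. f x + g x) = (\<lambda>x. (\<Sum>i<N + N'. neuron i x) - (b + b'))"
  proof -
    have "(\<Sum>i<N. neuron i x) = (\<Sum>i<N. tanh (inner (sampled_weight (x1 i) (x2 i)) x
                                   - sampled_bias (x1 i) (x2 i)) *\<^sub>R w i)" for x
      by (rule sum.cong) (simp_all add: neuron_def z1_def z2_def v_def)
    moreover have "(\<Sum>i<N'. neuron (N + i) x) = (\<Sum>i<N'. tanh (inner (sampled_weight (y1 i) (y2 i)) x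
                                   - sampled_bias (y1 i) (y2 i)) *\<^sub>R w' i)" for x
      by (simp add: neuron_def z1_def z2_def v_def)
    ultimately show ?thesis
      unfolding f g sum_lessThan_add by (simp add: algebra_simps)
  qed
  moreover have "\<forall>i<N + N'. z1 i \<in> X \<and> z2 i \<in> X \<and> z1 i \<noteq> z2 i"
    using A B by (auto simp: z1_def z2_def)
  ultimately show ?thesis
    using sampled_tanh_netI[of "N + N'" z1 X z2 _ v] unfolding neuron_def by blast
qed

lemma sampled_tanh_net_scaleR:
  assumes "sampled_tanh_net X (f :: 'a::euclidean_space \<Rightarrow> 'b::euclidean_space)"
  shows "sampled_tanh_net X (\<lambda>x. a *\<^sub>R f x)"
proof -
  obtain N :: nat and x1 x2 w b where A: "\<forall>i<N. x1 i \<in> X \<and> x2 i \<in> X \<and> x1 i \<noteq> x2 i"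
    and f: "f = (\<lambda>x. (\<Sum>i<N. tanh (inner (sampled_weight (x1 i) (x2 i)) x
                                   - sampled_bias (x1 i) (x2 i)) *\<^sub>R w i) - b)"
    using assms by (rule sampled_tanh_netE)
  show ?thesis
    by (rule sampled_tanh_netI[OF A, where w = "\<lambda>i. a *\<^sub>R w i" and b = "a *\<^sub>R b"])
      (simp add: f scaleR_diff_right scaleR_sum_right algebra_simps)
qed

lemma sampled_tanh_net_scaleR_vector:
  assumes "sampled_tanh_net X (f :: 'a::euclidean_space \<Rightarrow> real)"
  shows "sampled_tanh_net X (\<lambda>x. f x *\<^sub>R (v :: 'b::euclidean_space))"
proof -
  obtain N :: nat and x1 x2 w b where A: "\<forall>i<N. x1 i \<in> X \<and> x2 i \<in> X \<and> x1 i \<noteq> x2 i"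
    and f: "f = (\<lambda>x. (\<Sum>i<N. tanh (inner (sampled_weight (x1 i) (x2 i)) x
                                   - sampled_bias (x1 i) (x2 i)) *\<^sub>R w i) - b)"
    using assms by (rule sampled_tanh_netE)
  show ?thesis
    by (rule sampled_tanh_netI[OF A, where w = "\<lambda>i. w i *\<^sub>R v" and b = "b *\<^sub>R v"])
      (simp add: f scaleR_diff_left scaleR_sum_left)
qed

lemma sampled_tanh_net_const: "sampled_tanh_net X (\<lambda>x. c)"
  by (rule sampled_tanh_netI[where N = 0 and b = "- c"]) simp_all

lemma sampled_tanh_net_sum:
  assumes "finite I" "\<And>i. i \<in> I \<Longrightarrow> sampled_tanh_net X (f i)"
  shows "sampled_tanh_net X (\<lambda>x. \<Sum>i\<in>I. f i x)"
  using assms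
proof (induction I rule: finite_induct)
  case empty
  then show ?case using sampled_tanh_net_const[of X 0] by simp
next
  case (insert a F)
  then show ?case using sampled_tanh_net_add[of X "f a" "\<lambda>x. \<Sum>i\<in>F. f i x"] by simp
qed

lemma sampled_tanh_net_directional_neuron:
  fixes u y :: "'a::euclidean_space"
  assumes "norm u = 1" "y \<in> X" "y + r *\<^sub>R u \<in> X" "0 < r"
  shows "sampled_tanh_net X (\<lambda>x. tanh (s1 / r * (u \<bullet> x - u \<bullet> y) - s2))"
proof -
  have weight: "sampled_weight y (y + r *\<^sub>R u) = (s1 / r) *\<^sub>R u"
    using assms by (simp add: sampled_weight_def power2_eq_square)
  show ?thesis
    by (rule sampled_tanh_netI[of 1 "\<lambda>_. y" X "\<lambda>_. y + r *\<^sub>R u" _ "\<lambda>_. 1" 0])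
      (use assms in \<open>auto simp: sampled_bias_def weight algebra_simps\<close>)
qed

section \<open>Uniform approximability by a function space\<close>

locale real_function_space =
  fixes A :: "('a \<Rightarrow> real) set"
  assumes add_mem: "f \<in> A \<Longrightarrow> g \<in> A \<Longrightarrow> (\<lambda>x. f x + g x) \<in> A"
    and scale_mem: "f \<in> A \<Longrightarrow> (\<lambda>x. a * f x) \<in> A"
    and const_mem: "(\<lambda>x. c) \<in> A"
begin

lemma sum_mem: "finite I \<Longrightarrow> (\<And>i. i \<in> I \<Longrightarrow> f i \<in> A) \<Longrightarrow> (\<lambda>x. \<Sum>i\<in>I. f i x) \<in> A"
proof (induction I rule: finite_induct)
  case empty
  then show ?case using const_mem[of 0] by simp
next
  case (insert i I)
  then show ?case using add_mem[of "f i" "\<lambda>x. \<Sum>i\<in>I. f i x"] by simp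
qed

definition approximable_on :: "'a set \<Rightarrow> ('a \<Rightarrow> real) \<Rightarrow> bool" where
  "approximable_on S f \<longleftrightarrow> (\<forall>\<epsilon>>0. \<exists>g\<in>A. \<forall>x\<in>S. \<bar>g x - f x\<bar> < \<epsilon>)"

lemma approximable_on_mem: "f \<in> A \<Longrightarrow> approximable_on S f"
  unfolding approximable_on_def by force

lemma approximable_on_cong:
  "(\<And>x. x \<in> S \<Longrightarrow> f x = g x) \<Longrightarrow> approximable_on S f \<longleftrightarrow> approximable_on S g"
  unfolding approximable_on_def by simp

lemma approximable_on_uniform_limit:
  assumes "\<And>\<epsilon>. \<epsilon> > 0 \<Longrightarrow> \<exists>g. approximable_on S g \<and> (\<forall>x\<in>S. \<bar>g x - f x\<bar> < \<epsilon>)"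
  shows "approximable_on S f"
  unfolding approximable_on_def
proof (intro allI impI)
  fix \<epsilon> :: real
  assume "\<epsilon> > 0"
  then obtain g where "approximable_on S g" and g: "\<forall>x\<in>S. \<bar>g x - f x\<bar> < \<epsilon> / 2"
    using assms[of "\<epsilon> / 2"] by auto
  then obtain k where "k \<in> A" and k: "\<forall>x\<in>S. \<bar>k x - g x\<bar> < \<epsilon> / 2"
    using \<open>\<epsilon> > 0\<close> unfolding approximable_on_def by (meson half_gt_zero)
  have "\<bar>k x - f x\<bar> < \<epsilon>" if "x \<in> S" for x
    using g[rule_format, OF that] k[rule_format, OF that] by linarith
  with \<open>k \<in> A\<close> show "\<exists>k\<in>A. \<forall>x\<in>S. \<bar>k x - f x\<bar> < \<epsilon>" by blast
qed

lemma approximable_on_add: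
  assumes "approximable_on S f" "approximable_on S g"
  shows "approximable_on S (\<lambda>x. f x + g x)"
  unfolding approximable_on_def
proof (intro allI impI)
  fix \<epsilon> :: real
  assume "\<epsilon> > 0"
  then obtain f' g' where "f' \<in> A" "g' \<in> A"
    and f': "\<forall>x\<in>S. \<bar>f' x - f x\<bar> < \<epsilon> / 2" and g': "\<forall>x\<in>S. \<bar>g' x - g x\<bar> < \<epsilon> / 2"
    using assms unfolding approximable_on_def by (meson half_gt_zero)
  have "\<bar>(f' x + g' x) - (f x + g x)\<bar> < \<epsilon>" if "x \<in> S" for x
    using f'[rule_format, OF that] g'[rule_format, OF that] by linarith
  with \<open>f' \<in> A\<close> \<open>g' \<in> A\<close> show "\<exists>k\<in>A. \<forall>x\<in>S. \<bar>k x - (f x + g x)\<bar> < \<epsilon>"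
    by (intro bexI[of _ "\<lambda>x. f' x + g' x"] add_mem) auto
qed

lemma approximable_on_scale:
  assumes "approximable_on S f"
  shows "approximable_on S (\<lambda>x. a * f x)"
  unfolding approximable_on_def
proof (intro allI impI)
  fix \<epsilon> :: real
  assume "\<epsilon> > 0"
  then have "\<epsilon> / (\<bar>a\<bar> + 1) > 0" by simp
  then obtain g where "g \<in> A" and g: "\<forall>x\<in>S. \<bar>g x - f x\<bar> < \<epsilon> / (\<bar>a\<bar> + 1)"
    using assms unfolding approximable_on_def by blast
  have "\<bar>a * g x - a * f x\<bar> < \<epsilon>" if "x \<in> S" for x
  proof -
    have "\<bar>a * g x - a * f x\<bar> = \<bar>a\<bar> * \<bar>g x - f x\<bar>"
      by (simp add: abs_mult flip: right_diff_distrib)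
    also have "\<dots> \<le> (\<bar>a\<bar> + 1) * \<bar>g x - f x\<bar>" by (simp add: mult_right_mono)
    also have "\<dots> < \<epsilon>"
      using g[rule_format, OF that] by (simp add: pos_less_divide_eq add_pos_nonneg mult.commute)
    finally show ?thesis .
  qed
  with \<open>g \<in> A\<close> show "\<exists>k\<in>A. \<forall>x\<in>S. \<bar>k x - a * f x\<bar> < \<epsilon>"
    by (intro bexI[of _ "\<lambda>x. a * g x"] scale_mem) auto
qed

end

interpretation sampled_nets: real_function_space "{\<Psi> :: 'a \<Rightarrow> real. sampled_tanh_net X \<Psi>}"
  for X :: "'a::euclidean_space set"
proof
  show "(\<lambda>x. a * f x) \<in> {\<Psi>. sampled_tanh_net X \<Psi>}" if "f \<in> {\<Psi>. sampled_tanh_net X \<Psi>}" for f and a :: real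
    using that sampled_tanh_net_scaleR[where f = f and a = a] by simp
qed (simp_all add: sampled_tanh_net_add sampled_tanh_net_const)

section \<open>Staircases of steep tanh neurons\<close>

lemma s2_pos: "0 < s2"
  by (simp add: s2_def)

lemma s1_pos: "0 < s1"
  using s2_pos by (simp add: s1_def)

lemma tanh_tails:
  fixes \<eta> :: real
  assumes "0 < \<eta>"
  obtains M where "0 < M" "\<And>z. M \<le> z \<Longrightarrow> 1 - tanh z < \<eta>" "\<And>z. z \<le> - M \<Longrightarrow> 1 + tanh z < \<eta>"
proof -
  have "eventually (\<lambda>z. 1 - \<eta> < tanh z) at_top"
    using tanh_real_at_top assms by (intro order_tendstoD(1)) auto
  then obtain N where N: "\<And>z. N \<le> z \<Longrightarrow> 1 - \<eta> < tanh z"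
    unfolding eventually_at_top_linorder by blast
  show thesis
  proof (rule that[of "max N 1"])
    show "1 + tanh z < \<eta>" if "z \<le> - max N 1" for z
    proof -
      have "N \<le> - z"
        using that by linarith
      then show ?thesis
        using N[of "- z"] by simp
    qed
    show "1 - tanh z < \<eta>" if "max N 1 \<le> z" for z
      using N[of z] that by simp
  qed simp
qed

lemma abs_mult_le_of_bounds:
  fixes x y a b :: real
  assumes "\<bar>x\<bar> \<le> a" "0 \<le> y" "y \<le> b"
  shows "\<bar>x * y\<bar> \<le> a * b"
  using assms by (simp add: abs_mult mult_mono')

lemma tanh_step_error:
  fixes h :: "real \<Rightarrow> real"
  assumes "d < d'" and osc: "\<And>s. d \<le> s \<Longrightarrow> s \<le> d' \<Longrightarrow> \<bar>h s - h d'\<bar> \<le> \<omega>"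
    and right: "\<And>z. M \<le> z \<Longrightarrow> 1 - tanh z < \<eta>" and left: "\<And>z. z \<le> - M \<Longrightarrow> 1 + tanh z < \<eta>"
    and "0 < M" and k: "M \<le> k * ((d' - d) / 2)"
  shows "\<bar>(h d - h d') * ((1 - tanh (k * (t - (d + d') / 2))) / 2) - (h (max d t) - h (max d' t))\<bar>
           \<le> \<omega> * \<eta> + (if d < t \<and> t < d' then 2 * \<omega> else 0)"
proof -
  define z where "z = k * (t - (d + d') / 2)"
  define \<sigma> where "\<sigma> = (1 - tanh z) / 2"
  have \<sigma>: "0 < \<sigma>" "\<sigma> < 1"
    using tanh_real_bounds[of z] by (auto simp: \<sigma>_def)
  have \<Delta>: "\<bar>h d - h d'\<bar> \<le> \<omega>" and "0 \<le> \<omega>"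
    using osc[of d] osc[of d'] \<open>d < d'\<close> by auto
  have "0 < \<eta>"
    using right[of M] tanh_real_lt_1[of M] by simp
  have "0 < k"
    using k \<open>0 < M\<close> \<open>d < d'\<close> by (smt (verit) divide_pos_pos mult_nonpos_nonneg)
  consider (below) "t \<le> d" | (above) "d' \<le> t" | (inside) "d < t \<and> t < d'"
    by linarith
  then have "\<bar>(h d - h d') * \<sigma> - (h (max d t) - h (max d' t))\<bar>
           \<le> \<omega> * \<eta> + (if d < t \<and> t < d' then 2 * \<omega> else 0)"
  proof cases
    case below
    have "z \<le> k * (- ((d' - d) / 2))"
      unfolding z_def using below \<open>0 < k\<close> by (intro mult_left_mono) (simp_all add: field_simps)
    then have "1 - \<sigma> \<le> \<eta>"
      using left[of z] k \<open>0 < \<eta>\<close> by (simp add: \<sigma>_def field_simps)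
    then have "\<bar>(h d - h d') * (1 - \<sigma>)\<bar> \<le> \<omega> * \<eta>"
      using \<Delta> \<sigma> by (intro abs_mult_le_of_bounds) auto
    moreover have "(h d - h d') * \<sigma> - (h (max d t) - h (max d' t)) = - ((h d - h d') * (1 - \<sigma>))"
      using below \<open>d < d'\<close> by (simp add: max_def algebra_simps)
    ultimately show ?thesis
      using below by simp
  next
    case above
    have "k * ((d' - d) / 2) \<le> z"
      unfolding z_def using above \<open>0 < k\<close> by (intro mult_left_mono) (simp_all add: field_simps)
    then have "\<sigma> \<le> \<eta>"
      using right[of z] k \<open>0 < \<eta>\<close> by (simp add: \<sigma>_def field_simps)
    then have "\<bar>(h d - h d') * \<sigma>\<bar> \<le> \<omega> * \<eta>"
      using \<Delta> \<sigma> by (intro abs_mult_le_of_bounds) auto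
    moreover have "max d t = t" "max d' t = t"
      using above \<open>d < d'\<close> by auto
    ultimately show ?thesis
      using above by simp
  next
    case inside
    have "\<bar>(h d - h d') * \<sigma>\<bar> \<le> \<omega> * 1"
      using \<Delta> \<sigma> by (intro abs_mult_le_of_bounds) auto
    moreover have "\<bar>h (max d t) - h (max d' t)\<bar> \<le> \<omega>"
      using inside osc[of t] by (simp add: max_def)
    moreover have "0 \<le> \<omega> * \<eta>"
      using \<open>0 < \<eta>\<close> \<open>0 \<le> \<omega>\<close> by simp
    ultimately show ?thesis
      using inside by (simp add: abs_le_iff)
  qed
  then show ?thesis
    unfolding \<sigma>_def z_def .
qed

lemma card_cells_containing_le_one:
  fixes d :: "nat \<Rightarrow> real"
  assumes "mono d"
  shows "card {j \<in> {..<n}. d j < t \<and> t < d (Suc j)} \<le> 1"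
proof -
  have "i = j" if "d i < t" "t < d (Suc i)" "d j < t" "t < d (Suc j)" for i j
  proof (rule ccontr)
    assume "i \<noteq> j"
    then consider "Suc i \<le> j" | "Suc j \<le> i"
      by linarith
    then show False
      using that monoD[OF assms] by cases fastforce+
  qed
  then show ?thesis
    by (auto simp: card_le_Suc0_iff_eq)
qed

lemma tanh_staircase_error:
  fixes h :: "real \<Rightarrow> real" and d :: "nat \<Rightarrow> real"
  assumes "0 < n" "0 < q" and d_Suc: "\<And>j. d (Suc j) = d j + q"
    and osc: "\<And>j s. j < n \<Longrightarrow> d j \<le> s \<Longrightarrow> s \<le> d (Suc j) \<Longrightarrow> \<bar>h s - h (d (Suc j))\<bar> \<le> \<omega>"
    and right: "\<And>z. M \<le> z \<Longrightarrow> 1 - tanh z < 1 / n" and left: "\<And>z. z \<le> - M \<Longrightarrow> 1 + tanh z < 1 / n"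
    and "0 < M" and k: "\<forall>j<n. 2 * M / q \<le> k j"
  shows "\<bar>(\<Sum>j<n. (h (d j) - h (d (Suc j))) * ((1 - tanh (k j * (t - (d j + d (Suc j)) / 2))) / 2))
           - (h (max (d 0) t) - h (max (d n) t))\<bar> \<le> 3 * \<omega>"
proof -
  define err where "err j = (h (d j) - h (d (Suc j))) * ((1 - tanh (k j * (t - (d j + d (Suc j)) / 2))) / 2)
    - (h (max (d j) t) - h (max (d (Suc j)) t))" for j
  have "0 \<le> \<omega>"
    using osc[of 0 "d (Suc 0)"] \<open>0 < n\<close> \<open>0 < q\<close> by (simp add: d_Suc)
  have err: "\<bar>err j\<bar> \<le> \<omega> * (1 / n) + (if d j < t \<and> t < d (Suc j) then 2 * \<omega> else 0)"
    if "j < n" for j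
    unfolding err_def using \<open>0 < q\<close> k that
    by (intro tanh_step_error[where h = h and d = "d j" and d' = "d (Suc j)",
          OF _ osc[OF that] right left \<open>0 < M\<close>]) (auto simp: d_Suc field_simps)
  have "h (max (d 0) t) - h (max (d n) t) = (\<Sum>j<n. h (max (d j) t) - h (max (d (Suc j)) t))"
    using sum_lessThan_telescope'[of "\<lambda>j. h (max (d j) t)" n] by simp
  then have "\<bar>(\<Sum>j<n. (h (d j) - h (d (Suc j))) * ((1 - tanh (k j * (t - (d j + d (Suc j)) / 2))) / 2))
      - (h (max (d 0) t) - h (max (d n) t))\<bar> = \<bar>\<Sum>j<n. err j\<bar>"
    by (simp add: err_def sum_subtractf)
  also have "\<dots> \<le> (\<Sum>j<n. \<omega> * (1 / n) + (if d j < t \<and> t < d (Suc j) then 2 * \<omega> else 0))"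
    using err by (intro order_trans[OF sum_abs] sum_mono) auto
  also have "\<dots> = \<omega> + 2 * \<omega> * card {j \<in> {..<n}. d j < t \<and> t < d (Suc j)}"
    using \<open>0 < n\<close> by (simp add: sum.distrib flip: sum.inter_filter)
  also have "\<dots> \<le> \<omega> + 2 * \<omega> * 1"
  proof -
    have "mono d"
      using \<open>0 < q\<close> by (intro incseq_SucI) (simp add: d_Suc)
    then show ?thesis
      using card_cells_containing_le_one[of d n t] \<open>0 \<le> \<omega>\<close> by (intro add_left_mono mult_left_mono) auto
  qed
  finally show ?thesis
    by simp
qed

lemma uniform_grid_small_oscillation:
  fixes h :: "real \<Rightarrow> real"
  assumes "continuous_on {a..b} h" "a < b" "0 < \<omega>"
  obtains n :: nat and q :: real where "0 < n" "0 < q" "a + real n * q = b"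
    "\<And>j s. j < n \<Longrightarrow> a + real j * q \<le> s \<Longrightarrow> s \<le> a + real (Suc j) * q
       \<Longrightarrow> \<bar>h s - h (a + real (Suc j) * q)\<bar> \<le> \<omega>"
proof -
  obtain \<theta> where "0 < \<theta>"
    and \<theta>: "\<And>s s'. s \<in> {a..b} \<Longrightarrow> s' \<in> {a..b} \<Longrightarrow> \<bar>s' - s\<bar> < \<theta> \<Longrightarrow> \<bar>h s' - h s\<bar> < \<omega>"
    using compact_uniformly_continuous[OF assms(1) compact_Icc] assms(3)
    unfolding uniformly_continuous_on_def dist_real_def by metis
  obtain n :: nat where n: "(b - a) / \<theta> < n"
    using reals_Archimedean2 by blast
  have "0 < (b - a) / \<theta>"
    using assms(2) \<open>0 < \<theta>\<close> by simp
  then have "0 < n"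
    using n by linarith
  define q where "q = (b - a) / n"
  have "0 < q" "q < \<theta>" "a + real n * q = b"
    using n assms(2) \<open>0 < n\<close> \<open>0 < \<theta>\<close> by (auto simp: q_def field_simps)
  moreover have "\<bar>h s - h (a + real (Suc j) * q)\<bar> \<le> \<omega>"
    if "j < n" "a + real j * q \<le> s" "s \<le> a + real (Suc j) * q" for j s
  proof -
    have "real (Suc j) * q \<le> real n * q" "0 \<le> real j * q"
      using that \<open>0 < q\<close> by (auto intro: mult_right_mono)
    then have "s \<in> {a..b}" "a + real (Suc j) * q \<in> {a..b}"
      using that \<open>a + real n * q = b\<close> by auto
    moreover have "\<bar>s - (a + real (Suc j) * q)\<bar> < \<theta>"
      using that \<open>q < \<theta>\<close> by (auto simp: abs_if algebra_simps)
    ultimately show ?thesis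
      using \<theta>[of "a + real (Suc j) * q" s] by auto
  qed
  ultimately show thesis
    using \<open>0 < n\<close> that by blast
qed

lemma tanh_staircase:
  fixes h :: "real \<Rightarrow> real"
  assumes "continuous_on {a..b} h" "a < b" "0 < \<epsilon>"
  obtains n :: nat and e :: "nat \<Rightarrow> real" and K :: real and w :: "nat \<Rightarrow> real"
  where "\<forall>j<n. a < e j \<and> e j < b" "0 < K"
    "\<And>k t. \<forall>j<n. K \<le> k j \<Longrightarrow>
       \<bar>(\<Sum>j<n. w j * ((1 - tanh (k j * (t - e j))) / 2)) - (h (max a t) - h (max b t))\<bar> < \<epsilon>"
proof -
  obtain n q where "0 < n" "0 < q" and d_n: "a + real n * q = b"
    and osc: "\<And>j s. j < n \<Longrightarrow> a + real j * q \<le> s \<Longrightarrow> s \<le> a + real (Suc j) * q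
       \<Longrightarrow> \<bar>h s - h (a + real (Suc j) * q)\<bar> \<le> \<epsilon> / 4"
    using uniform_grid_small_oscillation[OF assms(1,2), of "\<epsilon> / 4"] assms(3) by auto
  define d where "d j = a + real j * q" for j
  have d_Suc: "d (Suc j) = d j + q" for j
    by (simp add: d_def algebra_simps)
  have "0 < 1 / real n"
    using \<open>0 < n\<close> by simp
  then obtain M where "0 < M" and right: "\<And>z. M \<le> z \<Longrightarrow> 1 - tanh z < 1 / n"
    and left: "\<And>z. z \<le> - M \<Longrightarrow> 1 + tanh z < 1 / n"
    using tanh_tails by metis
  show thesis
  proof (rule that[where n = n and e = "\<lambda>j. (d j + d (Suc j)) / 2" and w = "\<lambda>j. h (d j) - h (d (Suc j))"
        and K = "2 * M / q"])
    show "\<forall>j<n. a < (d j + d (Suc j)) / 2 \<and> (d j + d (Suc j)) / 2 < b"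
    proof (intro allI impI)
      fix j
      assume "j < n"
      then have "real (Suc j) * q \<le> real n * q" "0 \<le> real j * q"
        using \<open>0 < q\<close> by (auto intro: mult_right_mono)
      then have "a \<le> d j" "d (Suc j) \<le> b"
        using d_n unfolding d_def by linarith+
      then show "a < (d j + d (Suc j)) / 2 \<and> (d j + d (Suc j)) / 2 < b"
        using \<open>0 < q\<close> by (simp add: d_Suc field_simps)
    qed
    show "0 < 2 * M / q"
      using \<open>0 < M\<close> \<open>0 < q\<close> by simp
    show "\<bar>(\<Sum>j<n. (h (d j) - h (d (Suc j))) * ((1 - tanh (k j * (t - (d j + d (Suc j)) / 2))) / 2))
        - (h (max a t) - h (max b t))\<bar> < \<epsilon>" if "\<forall>j<n. 2 * M / q \<le> k j" for k t
      using tanh_staircase_error[where h = h and d = d and t = t, OF \<open>0 < n\<close> \<open>0 < q\<close> d_Suc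
          osc[folded d_def] right left \<open>0 < M\<close> that] assms(3) d_n
      unfolding d_def by simp
  qed
qed

lemma sampled_neuron_left_tail:
  fixes \<eta> \<rho> \<alpha> :: real
  assumes "0 < \<eta>" "0 < \<rho>"
  obtains r0 where "0 < r0"
    "\<And>r t. 0 < r \<Longrightarrow> r \<le> r0 \<Longrightarrow> t \<le> \<alpha> - \<rho> \<Longrightarrow> 1 + tanh (s1 / r * (t - \<alpha>) - s2) < \<eta>"
proof -
  obtain M where "0 < M" and left: "\<And>z. z \<le> - M \<Longrightarrow> 1 + tanh z < \<eta>"
    using tanh_tails[OF assms(1)] by metis
  show thesis
  proof (rule that[of "s1 * \<rho> / M"])
    show "0 < s1 * \<rho> / M"
      using s1_pos assms \<open>0 < M\<close> by simp
    fix r t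
    assume "0 < r" "r \<le> s1 * \<rho> / M" "t \<le> \<alpha> - \<rho>"
    have "M \<le> s1 / r * \<rho>"
      using \<open>0 < r\<close> \<open>0 < M\<close> \<open>r \<le> s1 * \<rho> / M\<close> by (simp add: field_simps)
    also have "\<dots> \<le> s1 / r * (\<alpha> - t)"
      using \<open>0 < r\<close> \<open>t \<le> \<alpha> - \<rho>\<close> s1_pos by (intro mult_left_mono) auto
    finally have "M \<le> s1 / r * (\<alpha> - t)" .
    moreover have "s1 / r * (t - \<alpha>) = - (s1 / r * (\<alpha> - t))"
      by (simp add: right_diff_distrib)
    ultimately have "s1 / r * (t - \<alpha>) - s2 \<le> - M"
      using s2_pos by linarith
    then show "1 + tanh (s1 / r * (t - \<alpha>) - s2) < \<eta>"
      by (rule left)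
  qed
qed

section \<open>The one-dimensional case\<close>

(* The one-dimensional picture: P is the projection of X' onto a unit direction, and a neuron may
   be sampled on [a, a + r] whenever that interval lies on one segment [p - eps, p + eps]. *)
locale sampled_tanh_line = real_function_space A for A :: "(real \<Rightarrow> real) set" +
  fixes P :: "real set" and eps :: real
  assumes compact_P: "compact P" and eps_pos: "0 < eps"
    and neuron_mem: "\<lbrakk>p \<in> P; p - eps \<le> a; 0 < r; a + r \<le> p + eps\<rbrakk>
      \<Longrightarrow> (\<lambda>t. tanh (s1 / r * (t - a) - s2)) \<in> A"
begin

definition nbhd :: "real set" where
  "nbhd = {t. \<exists>p\<in>P. \<bar>t - p\<bar> \<le> eps}"

lemma compact_nbhd: "compact nbhd"
proof -
  have "nbhd = {p + s |p s. p \<in> P \<and> s \<in> {-eps..eps}}"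
  proof (intro set_eqI iffI)
    fix t
    assume "t \<in> nbhd"
    then obtain p where "p \<in> P" "\<bar>t - p\<bar> \<le> eps"
      unfolding nbhd_def by blast
    then show "t \<in> {p + s |p s. p \<in> P \<and> s \<in> {-eps..eps}}"
      by (intro CollectI exI[of _ p] exI[of _ "t - p"]) (auto simp: abs_le_iff)
  next
    fix t
    assume "t \<in> {p + s |p s. p \<in> P \<and> s \<in> {-eps..eps}}"
    then show "t \<in> nbhd"
      unfolding nbhd_def by (auto simp: abs_le_iff intro!: bexI)
  qed
  then show ?thesis
    using compact_sums[OF compact_P compact_Icc] by simp
qed

lemma sharp_neuron_mem:
  assumes "p \<in> P" "\<bar>e - p\<bar> < eps" "0 < K"
  obtains k where "K \<le> k" "(\<lambda>t. tanh (k * (t - e))) \<in> A"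
proof -
  define r where "r = min (eps - \<bar>e - p\<bar>) (s1 / K)"
  have "0 < r"
    using assms s1_pos by (simp add: r_def)
  have "e - p \<le> eps - r" "p - e \<le> eps - r"
    by (auto simp: r_def)
  then have "(\<lambda>t. tanh (s1 / r * (t - (e - r / 2)) - s2)) \<in> A"
    using \<open>0 < r\<close> by (intro neuron_mem[OF \<open>p \<in> P\<close>]) (simp_all add: field_simps)
  \<comment> \<open>since s1 = 2 * s2, the neuron sampled on [e - r/2, e + r/2] is centred at e\<close>
  moreover have "s1 / r * (t - (e - r / 2)) - s2 = s1 / r * (t - e)" for t
    using \<open>0 < r\<close> by (simp add: s1_def field_simps)
  moreover have "K \<le> s1 / r"
  proof -
    have "r \<le> s1 / K"
      by (simp add: r_def)
    then show ?thesis
      using \<open>0 < r\<close> \<open>0 < K\<close> by (simp add: field_simps)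
  qed
  ultimately show thesis
    using that[of "s1 / r"] by simp
qed

definition clamped_approximable :: "real \<Rightarrow> bool" where
  "clamped_approximable c \<longleftrightarrow>
     (\<forall>h. continuous_on UNIV h \<longrightarrow> approximable_on nbhd (\<lambda>t. h (max c t)))"

lemma clamped_approximableD:
  "clamped_approximable c \<Longrightarrow> continuous_on UNIV h \<Longrightarrow> approximable_on nbhd (\<lambda>t. h (max c t))"
  unfolding clamped_approximable_def by blast

lemma clamped_approximable_mono:
  assumes "clamped_approximable c" "c \<le> c'"
  shows "clamped_approximable c'"
  unfolding clamped_approximable_def
proof (intro allI impI)
  fix h :: "real \<Rightarrow> real"
  assume "continuous_on UNIV h"
  then have "continuous_on UNIV (\<lambda>t. h (max c' t))"
    by (rule continuous_on_compose2) (auto intro: continuous_intros)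
  then have "approximable_on nbhd (\<lambda>t. h (max c' (max c t)))"
    by (rule clamped_approximableD[OF assms(1)])
  moreover have "max c' (max c t) = max c' t" for t
    using assms(2) by linarith
  ultimately show "approximable_on nbhd (\<lambda>t. h (max c' t))"
    by simp
qed

lemma clamped_approximable_of_upper_bound:
  assumes "nbhd \<subseteq> {..c}"
  shows "clamped_approximable c"
  unfolding clamped_approximable_def
proof (intro allI impI)
  fix h :: "real \<Rightarrow> real"
  have "approximable_on nbhd (\<lambda>t. h c)"
    by (rule approximable_on_mem[OF const_mem])
  moreover have "h (max c t) = h c" if "t \<in> nbhd" for t
    using assms that by (auto simp: max_def)
  ultimately show "approximable_on nbhd (\<lambda>t. h (max c t))"
    using approximable_on_cong by metis
qed

lemma nbhd_bounded:
  obtains B where "\<And>t. t \<in> nbhd \<Longrightarrow> \<bar>t\<bar> \<le> B"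
  using compact_imp_bounded[OF compact_nbhd] unfolding bounded_iff real_norm_def by blast

lemma clamped_approximable_right_limit:
  assumes "\<forall>c'>c. clamped_approximable c'"
  shows "clamped_approximable c"
  unfolding clamped_approximable_def
proof (intro allI impI approximable_on_uniform_limit)
  fix h :: "real \<Rightarrow> real" and \<epsilon> :: real
  assume h: "continuous_on UNIV h" and "0 < \<epsilon>"
  obtain B where B: "\<And>t. t \<in> nbhd \<Longrightarrow> \<bar>t\<bar> \<le> B"
    using nbhd_bounded by blast
  define I where "I = {c..\<bar>c\<bar> + \<bar>B\<bar> + 1}"
  have "uniformly_continuous_on I h"
    unfolding I_def by (intro compact_uniformly_continuous continuous_on_subset[OF h]) auto
  then obtain \<delta> where "0 < \<delta>" and \<delta>: "\<And>s s'. s \<in> I \<Longrightarrow> s' \<in> I \<Longrightarrow> \<bar>s' - s\<bar> < \<delta> \<Longrightarrow> \<bar>h s' - h s\<bar> < \<epsilon>"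
    using \<open>0 < \<epsilon>\<close> unfolding uniformly_continuous_on_def dist_real_def by metis
  define c' where "c' = c + min (\<delta> / 2) 1"
  have "approximable_on nbhd (\<lambda>t. h (max c' t))"
    using assms \<open>0 < \<delta>\<close> h by (auto simp: c'_def intro: clamped_approximableD)
  moreover have "\<bar>h (max c' t) - h (max c t)\<bar> < \<epsilon>" if "t \<in> nbhd" for t
    using B[OF that] \<open>0 < \<delta>\<close> by (intro \<delta>) (auto simp: I_def c'_def)
  ultimately show "\<exists>g. approximable_on nbhd g \<and> (\<forall>t\<in>nbhd. \<bar>g t - h (max c t)\<bar> < \<epsilon>)"
    by blast
qed

lemma left_neighbourhood_cases:
  obtains (interior) \<delta> where "0 < \<delta>" "\<forall>e\<in>{c - \<delta><..<c}. \<exists>p\<in>P. \<bar>e - p\<bar> < eps"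
  | (gap) \<delta> where "0 < \<delta>" "{c - \<delta><..<c} \<inter> nbhd = {}"
proof (cases "\<exists>p\<in>P. p - eps < c \<and> c \<le> p + eps")
  case True
  then obtain p where "p \<in> P" "p - eps < c" "c \<le> p + eps"
    by blast
  then show thesis
    by (intro interior[of "c - (p - eps)"]) (auto simp: abs_less_iff intro!: bexI[of _ p])
next
  case False
  then have far: "p + eps < c \<or> c \<le> p - eps" if "p \<in> P" for p
    using that by force
  define L where "L = P \<inter> {..c - eps}"
  show thesis
  proof (cases "L = {}")
    case True
    have "{c - 1<..<c} \<inter> nbhd = {}"
      using far True eps_pos by (fastforce simp: L_def nbhd_def abs_le_iff)
    then show thesis
      by (intro gap[of 1]) auto
  next
    case False
    have "compact L"
      unfolding L_def by (intro compact_Int_closed compact_P) auto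
    then obtain q where "q \<in> L" and q: "\<And>p. p \<in> L \<Longrightarrow> p \<le> q"
      using compact_attains_sup[OF _ False] by blast
    then have "q + eps < c"
      using far eps_pos by (force simp: L_def)
    moreover have "{c - (c - (q + eps))<..<c} \<inter> nbhd = {}"
      using far q eps_pos by (fastforce simp: L_def nbhd_def abs_le_iff)
    ultimately show thesis
      by (intro gap[of "c - (q + eps)"]) auto
  qed
qed

lemma nbhd_right_of_gap:
  assumes "\<alpha> \<in> nbhd" "0 < \<mu>" "{\<alpha> - \<mu><..<\<alpha>} \<inter> nbhd = {}"
  obtains p where "p \<in> P" "p - eps \<le> \<alpha>" "\<alpha> < p + eps"
proof -
  obtain p where "p \<in> P" "\<bar>\<alpha> - p\<bar> \<le> eps"
    using assms(1) unfolding nbhd_def by blast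
  moreover have "\<alpha> \<noteq> p + eps"
  proof
    assume "\<alpha> = p + eps"
    then have "\<alpha> - min (\<mu> / 2) eps \<in> nbhd"
      using \<open>p \<in> P\<close> eps_pos assms(2) unfolding nbhd_def by (auto intro!: bexI[of _ p])
    moreover have "\<alpha> - min (\<mu> / 2) eps \<in> {\<alpha> - \<mu><..<\<alpha>}"
      using assms(2) eps_pos by auto
    ultimately show False
      using assms(3) by blast
  qed
  ultimately show thesis
    using that by (auto simp: abs_le_iff)
qed

lemma anchored_neuron_mem:
  assumes "p \<in> P" "p - eps \<le> \<alpha>" "\<alpha> < p + eps" "\<beta> < \<alpha>" "0 < \<eta>"
  obtains N where "N \<in> A" "continuous_on UNIV N" "N \<alpha> = tanh (- s2)" "\<And>t. t \<le> \<beta> \<Longrightarrow> \<bar>N t + 1\<bar> < \<eta>"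
proof -
  obtain r0 where "0 < r0" and tail:
    "\<And>r t. 0 < r \<Longrightarrow> r \<le> r0 \<Longrightarrow> t \<le> \<alpha> - (\<alpha> - \<beta>) \<Longrightarrow> 1 + tanh (s1 / r * (t - \<alpha>) - s2) < \<eta>"
    using sampled_neuron_left_tail[of \<eta> "\<alpha> - \<beta>" \<alpha>] assms(4,5) by auto
  define r where "r = min r0 (p + eps - \<alpha>)"
  have "0 < r"
    using \<open>0 < r0\<close> assms(3) by (simp add: r_def)
  show thesis
  proof (rule that[of "\<lambda>t. tanh (s1 / r * (t - \<alpha>) - s2)"])
    show "(\<lambda>t. tanh (s1 / r * (t - \<alpha>) - s2)) \<in> A"
      using \<open>0 < r\<close> assms(1-3) by (intro neuron_mem) (auto simp: r_def)
    show "continuous_on UNIV (\<lambda>t. tanh (s1 / r * (t - \<alpha>) - s2))"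
      by (intro continuous_intros) (metis cosh_real_pos less_irrefl)
    show "\<bar>tanh (s1 / r * (t - \<alpha>) - s2) + 1\<bar> < \<eta>" if "t \<le> \<beta>" for t
      using tail[OF \<open>0 < r\<close> _, of t] that tanh_real_gt_neg1[of "s1 / r * (t - \<alpha>) - s2"]
      by (simp add: r_def)
  qed simp
qed

lemma clamped_approximable_across_gap:
  assumes Q\<alpha>: "clamped_approximable \<alpha>" and "p \<in> P" "p - eps \<le> \<alpha>" "\<alpha> < p + eps"
    and "\<beta> < \<alpha>" and split: "\<forall>t\<in>nbhd. t \<le> \<beta> \<or> \<alpha> \<le> t" and "\<beta> \<le> c" "c \<le> \<alpha>"
  shows "clamped_approximable c"
  unfolding clamped_approximable_def
proof (intro allI impI approximable_on_uniform_limit)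
  fix h :: "real \<Rightarrow> real" and \<epsilon> :: real
  assume h: "continuous_on UNIV h" and "0 < \<epsilon>"
  define \<gamma> where "\<gamma> = -1 - tanh (- s2)"
  have "\<gamma> < 0"
    using tanh_real_gt_neg1[of "- s2"] by (simp add: \<gamma>_def)
  define \<Delta> where "\<Delta> = h c - h \<alpha>"
  define \<eta> where "\<eta> = \<epsilon> * \<bar>\<gamma>\<bar> / (\<bar>\<Delta>\<bar> + 1)"
  have "0 < \<eta>"
    using \<open>0 < \<epsilon>\<close> \<open>\<gamma> < 0\<close> unfolding \<eta>_def by (intro divide_pos_pos mult_pos_pos) auto
  then obtain N where "N \<in> A" "continuous_on UNIV N" and N\<alpha>: "N \<alpha> = tanh (- s2)"
    and tail: "\<And>t. t \<le> \<beta> \<Longrightarrow> \<bar>N t + 1\<bar> < \<eta>"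
    using anchored_neuron_mem[OF assms(2-5)] by metis
  \<comment> \<open>N t - N (max \<alpha> t) vanishes above the gap and is close to \<gamma> below it\<close>
  define G where "G t = h (max \<alpha> t) + \<Delta> / \<gamma> * N t + (- \<Delta> / \<gamma>) * N (max \<alpha> t)" for t
  have "approximable_on nbhd G"
    unfolding G_def
    by (intro approximable_on_add approximable_on_scale approximable_on_mem[OF \<open>N \<in> A\<close>]
        clamped_approximableD[OF Q\<alpha>] h \<open>continuous_on UNIV N\<close>)
  moreover have "\<bar>G t - h (max c t)\<bar> < \<epsilon>" if "t \<in> nbhd" for t
  proof (cases "\<alpha> \<le> t")
    case True
    then show ?thesis
      using \<open>c \<le> \<alpha>\<close> \<open>0 < \<epsilon>\<close> by (simp add: G_def max_def)
  next
    case False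
    then have "t \<le> \<beta>"
      using split that by auto
    then have "max c t = c" "max \<alpha> t = \<alpha>"
      using \<open>\<beta> \<le> c\<close> \<open>\<beta> < \<alpha>\<close> by auto
    then have "G t - h (max c t) = \<Delta> / \<gamma> * (N t - N \<alpha>) + (h \<alpha> - h c)"
      by (simp add: G_def right_diff_distrib)
    also have "\<dots> = \<Delta> / \<gamma> * (N t - (-1 - \<gamma>)) - \<Delta>"
      by (simp add: N\<alpha> \<gamma>_def \<Delta>_def)
    also have "\<dots> = \<Delta> / \<gamma> * (N t + 1)"
      using \<open>\<gamma> < 0\<close> by (simp add: field_simps)
    finally have "\<bar>G t - h (max c t)\<bar> = \<bar>\<Delta>\<bar> / \<bar>\<gamma>\<bar> * \<bar>N t + 1\<bar>"
      by (simp add: abs_mult abs_divide)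
    also have "\<dots> \<le> (\<bar>\<Delta>\<bar> + 1) / \<bar>\<gamma>\<bar> * \<bar>N t + 1\<bar>"
      by (intro mult_right_mono divide_right_mono) auto
    also have "\<dots> < (\<bar>\<Delta>\<bar> + 1) / \<bar>\<gamma>\<bar> * \<eta>"
      using tail[OF \<open>t \<le> \<beta>\<close>] \<open>\<gamma> < 0\<close> by (intro mult_strict_left_mono divide_pos_pos) auto
    also have "\<dots> = \<epsilon>"
      using \<open>\<gamma> < 0\<close> by (simp add: \<eta>_def)
    finally show ?thesis .
  qed
  ultimately show "\<exists>g. approximable_on nbhd g \<and> (\<forall>t\<in>nbhd. \<bar>g t - h (max c t)\<bar> < \<epsilon>)"
    by blast
qed

lemma clamped_approximable_step_gap:
  assumes "clamped_approximable c" "0 < \<delta>" "{c - \<delta><..<c} \<inter> nbhd = {}"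
  shows "clamped_approximable (c - \<delta> / 2)"
proof (cases "nbhd \<inter> {c..} = {}")
  case True
  have "t \<le> c - \<delta> / 2" if "t \<in> nbhd" for t
  proof -
    have "t < c" "t \<notin> {c - \<delta><..<c}"
      using True assms(3) that by auto
    then show ?thesis
      using assms(2) by auto
  qed
  then have "nbhd \<subseteq> {..c - \<delta> / 2}"
    by auto
  then show ?thesis
    by (rule clamped_approximable_of_upper_bound)
next
  case False
  have "compact (nbhd \<inter> {c..})"
    by (intro compact_Int_closed compact_nbhd) auto
  then obtain \<alpha> where \<alpha>: "\<alpha> \<in> nbhd" "c \<le> \<alpha>" and least: "\<And>t. t \<in> nbhd \<Longrightarrow> c \<le> t \<Longrightarrow> \<alpha> \<le> t"
    using compact_attains_inf[OF _ False] by blast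
  have split: "\<forall>t\<in>nbhd. t \<le> c - \<delta> \<or> \<alpha> \<le> t"
  proof
    fix t
    assume "t \<in> nbhd"
    then have "t \<notin> {c - \<delta><..<c}"
      using assms(3) by auto
    then show "t \<le> c - \<delta> \<or> \<alpha> \<le> t"
      using least[OF \<open>t \<in> nbhd\<close>] by force
  qed
  then have gap: "{\<alpha> - (\<alpha> - (c - \<delta>))<..<\<alpha>} \<inter> nbhd = {}"
    by fastforce
  have "0 < \<alpha> - (c - \<delta>)"
    using assms(2) \<alpha>(2) by simp
  then obtain p where "p \<in> P" "p - eps \<le> \<alpha>" "\<alpha> < p + eps"
    using nbhd_right_of_gap[OF \<alpha>(1) _ gap] by blast
  then show ?thesis
    using assms(2) \<alpha>(2) split
    by (intro clamped_approximable_across_gap[OF clamped_approximable_mono[OF assms(1) \<alpha>(2)]]) auto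
qed

lemma approximable_on_clamp_difference:
  assumes "c' < c" and interior: "\<forall>e\<in>{c'<..<c}. \<exists>p\<in>P. \<bar>e - p\<bar> < eps"
    and h: "continuous_on UNIV h"
  shows "approximable_on nbhd (\<lambda>t. h (max c' t) - h (max c t))"
  unfolding approximable_on_def
proof (intro allI impI)
  fix \<epsilon> :: real
  assume "0 < \<epsilon>"
  obtain n :: nat and e K w where e: "\<forall>j<n. c' < e j \<and> e j < c" and "0 < K" and staircase:
    "\<And>k t. \<forall>j<n. K \<le> k j \<Longrightarrow>
       \<bar>(\<Sum>j<n. w j * ((1 - tanh (k j * (t - e j))) / 2)) - (h (max c' t) - h (max c t))\<bar> < \<epsilon>"
    by (rule tanh_staircase[OF continuous_on_subset[OF h subset_UNIV] \<open>c' < c\<close> \<open>0 < \<epsilon>\<close>]) auto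
  have "\<exists>k. K \<le> k \<and> (\<lambda>t. tanh (k * (t - e j))) \<in> A" if "j < n" for j
  proof -
    have "e j \<in> {c'<..<c}"
      using e \<open>j < n\<close> by auto
    then obtain p where "p \<in> P" "\<bar>e j - p\<bar> < eps"
      using interior by blast
    then show ?thesis
      using sharp_neuron_mem[OF _ _ \<open>0 < K\<close>] by blast
  qed
  then obtain k where k: "\<And>j. j < n \<Longrightarrow> K \<le> k j \<and> (\<lambda>t. tanh (k j * (t - e j))) \<in> A"
    by metis
  have mem: "(\<lambda>t. \<Sum>j<n. w j * ((1 - tanh (k j * (t - e j))) / 2)) \<in> A"
  proof (rule sum_mem)
    fix j
    assume "j \<in> {..<n}"
    then have "(\<lambda>t. tanh (k j * (t - e j))) \<in> A"
      using k by blast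
    then have "(\<lambda>t. (- w j / 2) * tanh (k j * (t - e j)) + w j / 2) \<in> A"
      by (rule add_mem[OF scale_mem const_mem])
    moreover have "(\<lambda>t. (- w j / 2) * tanh (k j * (t - e j)) + w j / 2)
        = (\<lambda>t. w j * ((1 - tanh (k j * (t - e j))) / 2))"
      by (simp add: fun_eq_iff field_simps)
    ultimately show "(\<lambda>t. w j * ((1 - tanh (k j * (t - e j))) / 2)) \<in> A"
      by simp
  qed simp
  have "\<bar>(\<Sum>j<n. w j * ((1 - tanh (k j * (t - e j))) / 2)) - (h (max c' t) - h (max c t))\<bar> < \<epsilon>" for t
    using k by (intro staircase) blast
  then show "\<exists>g\<in>A. \<forall>t\<in>nbhd. \<bar>g t - (h (max c' t) - h (max c t))\<bar> < \<epsilon>"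
    by (intro bexI[OF _ mem]) simp
qed

lemma clamped_approximable_step_interior:
  assumes "clamped_approximable c" "0 < \<delta>"
    and interior: "\<forall>e\<in>{c - \<delta><..<c}. \<exists>p\<in>P. \<bar>e - p\<bar> < eps"
  shows "clamped_approximable (c - \<delta> / 2)"
  unfolding clamped_approximable_def
proof (intro allI impI)
  fix h :: "real \<Rightarrow> real"
  assume h: "continuous_on UNIV h"
  have "approximable_on nbhd (\<lambda>t. h (max (c - \<delta> / 2) t) - h (max c t))"
    using interior \<open>0 < \<delta>\<close> by (intro approximable_on_clamp_difference h) auto
  then have "approximable_on nbhd (\<lambda>t. h (max c t) + (h (max (c - \<delta> / 2) t) - h (max c t)))"
    by (intro approximable_on_add clamped_approximableD[OF assms(1) h])
  then show "approximable_on nbhd (\<lambda>t. h (max (c - \<delta> / 2) t))"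
    by simp
qed

lemma clamped_approximable_everywhere: "clamped_approximable c"
proof (rule ccontr)
  assume "\<not> clamped_approximable c"
  obtain B where B: "\<And>t. t \<in> nbhd \<Longrightarrow> \<bar>t\<bar> \<le> B"
    using nbhd_bounded by blast
  define S where "S = {c. clamped_approximable c}"
  have "B \<in> S"
    unfolding S_def mem_Collect_eq using B
    by (intro clamped_approximable_of_upper_bound) (force simp: abs_le_iff)
  have "c < s" if "s \<in> S" for s
    using \<open>\<not> clamped_approximable c\<close> clamped_approximable_mono that
    by (metis S_def mem_Collect_eq not_less)
  then have "bdd_below S"
    by (meson bdd_belowI less_imp_le)
  have "\<forall>c'>Inf S. clamped_approximable c'"
  proof (intro allI impI)
    fix c'
    assume "Inf S < c'"
    then obtain s where "s \<in> S" "s < c'"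
      using cInf_lessD[of S c'] \<open>B \<in> S\<close> by blast
    then show "clamped_approximable c'"
      using clamped_approximable_mono by (force simp: S_def)
  qed
  then have "clamped_approximable (Inf S)"
    by (rule clamped_approximable_right_limit)
  obtain \<delta> where "0 < \<delta>" "Inf S - \<delta> / 2 \<in> S"
  proof (cases rule: left_neighbourhood_cases[of "Inf S"])
    case (interior \<delta>)
    then show thesis
      using that clamped_approximable_step_interior[OF \<open>clamped_approximable (Inf S)\<close>]
      by (simp add: S_def)
  next
    case (gap \<delta>)
    then show thesis
      using that clamped_approximable_step_gap[OF \<open>clamped_approximable (Inf S)\<close>]
      by (simp add: S_def)
  qed
  then have "Inf S \<le> Inf S - \<delta> / 2"
    using cInf_lower[OF _ \<open>bdd_below S\<close>] by blast
  then show False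
    using \<open>0 < \<delta>\<close> by simp
qed

theorem approximable_on_nbhd:
  assumes "continuous_on UNIV h"
  shows "approximable_on nbhd h"
proof -
  obtain B where B: "\<And>t. t \<in> nbhd \<Longrightarrow> \<bar>t\<bar> \<le> B"
    using nbhd_bounded by blast
  have "approximable_on nbhd (\<lambda>t. h (max (- B) t))"
    by (rule clamped_approximableD[OF clamped_approximable_everywhere assms])
  moreover have "h (max (- B) t) = h t" if "t \<in> nbhd" for t
    using B[OF that] by (simp add: max_def abs_le_iff)
  ultimately show ?thesis
    using approximable_on_cong[of nbhd "\<lambda>t. h (max (- B) t)" h] by simp
qed

end

section \<open>Ridge functions, exponential sums and density\<close>

lemma sampled_tanh_line_ridge:
  fixes X' :: "'a::euclidean_space set" and u :: 'a
  assumes "compact X'" "0 < eps" "norm u = 1"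
  shows "sampled_tanh_line {\<phi>. sampled_tanh_net {x. infdist x X' \<le> eps} (\<lambda>x. \<phi> (u \<bullet> x))}
           ((\<lambda>x. u \<bullet> x) ` X') eps"
proof
  let ?X = "{x. infdist x X' \<le> eps}"
  show "compact ((\<lambda>x. u \<bullet> x) ` X')"
    by (intro compact_continuous_image continuous_intros assms(1))
  show "(\<lambda>t. tanh (s1 / r * (t - a) - s2)) \<in> {\<phi>. sampled_tanh_net ?X (\<lambda>x. \<phi> (u \<bullet> x))}"
    if hyps: "p \<in> (\<lambda>x. u \<bullet> x) ` X'" "p - eps \<le> a" "0 < r" "a + r \<le> p + eps" for p a r
  proof -
    obtain c where "c \<in> X'" "p = u \<bullet> c"
      using hyps(1) by blast
    have on_line: "c + s *\<^sub>R u \<in> ?X" if "\<bar>s\<bar> \<le> eps" for s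
      using infdist_le[OF \<open>c \<in> X'\<close>, of "c + s *\<^sub>R u"] that assms(3) by (simp add: dist_norm)
    define y where "y = c + (a - p) *\<^sub>R u"
    have "y \<in> ?X"
      unfolding y_def using hyps(2-4) by (intro on_line) auto
    moreover have "y + r *\<^sub>R u \<in> ?X"
      using on_line[of "a + r - p"] hyps(2-4) by (simp add: y_def algebra_simps)
    moreover have "u \<bullet> y = a"
      using assms(3) by (simp add: y_def \<open>p = u \<bullet> c\<close> inner_add_right power2_norm_eq_inner[symmetric])
    ultimately show ?thesis
      using sampled_tanh_net_directional_neuron[OF assms(3) _ _ \<open>0 < r\<close>] by auto
  qed
next
  let ?A = "{\<phi>. sampled_tanh_net {x. infdist x X' \<le> eps} (\<lambda>x. \<phi> (u \<bullet> x))}"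
  show "(\<lambda>t. f t + g t) \<in> ?A" if "f \<in> ?A" "g \<in> ?A" for f g
    using that by (simp add: sampled_tanh_net_add)
  show "(\<lambda>t. a * f t) \<in> ?A" if "f \<in> ?A" for f :: "real \<Rightarrow> real" and a :: real
    using sampled_nets.scale_mem[where f = "\<lambda>x. f (u \<bullet> x)" and a = a] that by simp
  show "(\<lambda>t. c) \<in> ?A" for c
    by (simp add: sampled_tanh_net_const)
qed (use assms(2) in simp)

lemma sampled_tanh_net_ridge_approximation:
  fixes X' :: "'a::euclidean_space set" and eps :: real and u :: 'a
  defines "X \<equiv> {x. infdist x X' \<le> eps}"
  assumes "compact X'" "X' \<noteq> {}" "0 < eps" "norm u = 1" "continuous_on UNIV h"
  shows "sampled_nets.approximable_on X X (\<lambda>x. h (u \<bullet> x))"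
proof -
  let ?X = "{x. infdist x X' \<le> eps}"
  interpret line: sampled_tanh_line "{\<phi>. sampled_tanh_net ?X (\<lambda>x. \<phi> (u \<bullet> x))}" "(\<lambda>x. u \<bullet> x) ` X'" eps
    by (rule sampled_tanh_line_ridge[OF assms(2,4,5)])
  have projection: "u \<bullet> x \<in> line.nbhd" if "x \<in> ?X" for x
  proof -
    obtain c where "c \<in> X'" "infdist x X' = dist x c"
      using infdist_attains_inf[OF compact_imp_closed[OF assms(2)] assms(3)] by blast
    moreover have "\<bar>u \<bullet> x - u \<bullet> c\<bar> \<le> norm (x - c)"
      using Cauchy_Schwarz_ineq2[of u "x - c"] assms(5) by (simp add: inner_diff_right)
    ultimately have "\<bar>u \<bullet> x - u \<bullet> c\<bar> \<le> eps"
      using that by (simp add: dist_norm)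
    then show ?thesis
      using \<open>c \<in> X'\<close> unfolding line.nbhd_def by blast
  qed
  show ?thesis
    unfolding sampled_nets.approximable_on_def X_def
  proof (intro allI impI)
    fix \<epsilon> :: real
    assume "0 < \<epsilon>"
    then obtain \<phi> where "sampled_tanh_net ?X (\<lambda>x. \<phi> (u \<bullet> x))" "\<forall>t\<in>line.nbhd. \<bar>\<phi> t - h t\<bar> < \<epsilon>"
      using line.approximable_on_nbhd[OF assms(6)] unfolding line.approximable_on_def by blast
    then show "\<exists>\<Psi>\<in>{\<Psi>. sampled_tanh_net ?X \<Psi>}. \<forall>x\<in>?X. \<bar>\<Psi> x - h (u \<bullet> x)\<bar> < \<epsilon>"
      using projection by auto
  qed
qed

inductive_set exp_sums :: "('a::real_inner \<Rightarrow> real) set" where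
  exp_sums_exp: "(\<lambda>x. exp (v \<bullet> x)) \<in> exp_sums"
| exp_sums_add: "f \<in> exp_sums \<Longrightarrow> g \<in> exp_sums \<Longrightarrow> (\<lambda>x. f x + g x) \<in> exp_sums"
| exp_sums_scale: "f \<in> exp_sums \<Longrightarrow> (\<lambda>x. c * f x) \<in> exp_sums"

lemma exp_sums_const: "(\<lambda>x. c) \<in> exp_sums"
  using exp_sums_scale[OF exp_sums_exp[of 0], of c] by simp

lemma exp_sums_mult:
  assumes "f \<in> exp_sums" "g \<in> exp_sums"
  shows "(\<lambda>x. f x * g x) \<in> exp_sums"
  using assms
proof (induction f rule: exp_sums.induct)
  case (exp_sums_exp v)
  from \<open>g \<in> exp_sums\<close> show ?case
  proof (induction g rule: exp_sums.induct)
    case (exp_sums_exp w)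
    have "(\<lambda>x. exp (v \<bullet> x) * exp (w \<bullet> x)) = (\<lambda>x. exp ((v + w) \<bullet> x))"
      by (simp add: inner_add_left exp_add)
    then show ?case
      by (simp add: exp_sums.exp_sums_exp)
  next
    case (exp_sums_add g1 g2)
    then show ?case
      using exp_sums.exp_sums_add by (simp add: distrib_left)
  next
    case (exp_sums_scale g c)
    then show ?case
      using exp_sums.exp_sums_scale[of _ c] by (simp add: mult.left_commute)
  qed
next
  case (exp_sums_add f1 f2)
  then show ?case
    using exp_sums.exp_sums_add by (simp add: distrib_right)
next
  case (exp_sums_scale f c)
  then show ?case
    using exp_sums.exp_sums_scale[of _ c] by (simp add: mult.assoc)
qed

lemma continuous_on_exp_sums: "f \<in> exp_sums \<Longrightarrow> continuous_on S f"
  by (induction rule: exp_sums.induct) (auto intro!: continuous_intros)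

lemma exp_sums_dense:
  fixes S :: "'a::euclidean_space set"
  assumes "compact S" "continuous_on S g" "0 < e"
  shows "\<exists>f\<in>exp_sums. \<forall>x\<in>S. \<bar>g x - f x\<bar> < e"
proof -
  have separating: "exp ((x - y) \<bullet> x) \<noteq> exp ((x - y) \<bullet> y)" if "x \<noteq> y" for x y :: 'a
  proof -
    have "0 < (x - y) \<bullet> (x - y)"
      using that by simp
    then show ?thesis
      by (simp add: inner_diff_right)
  qed
  have "\<exists>f. f \<in> exp_sums \<and> (\<forall>x\<in>S. \<bar>g x - f x\<bar> < e)"
  proof (rule Stone_Weierstrass_HOL[where P = "\<lambda>f. f \<in> exp_sums", OF assms(1) exp_sums_const
        continuous_on_exp_sums _ _ _ assms(2,3)])
    show "(\<lambda>x. f x + h x) \<in> exp_sums" if "f \<in> exp_sums \<and> h \<in> exp_sums" for f h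
      using that by (blast intro: exp_sums_add)
    show "(\<lambda>x. f x * h x) \<in> exp_sums" if "f \<in> exp_sums \<and> h \<in> exp_sums" for f h
      using that by (blast intro: exp_sums_mult)
    show "\<exists>f. f \<in> exp_sums \<and> f x \<noteq> f y" if "x \<in> S \<and> y \<in> S \<and> x \<noteq> y" for x y
      using separating[of x y] that exp_sums_exp[of "x - y"] by blast
  qed
  then show ?thesis
    by blast
qed

lemma sampled_tanh_net_approximable_exp_sums:
  fixes X' :: "'a::euclidean_space set" and eps :: real
  defines "X \<equiv> {x. infdist x X' \<le> eps}"
  assumes "compact X'" "X' \<noteq> {}" "0 < eps" "f \<in> exp_sums"
  shows "sampled_nets.approximable_on X X f"
  using \<open>f \<in> exp_sums\<close>
proof (induction rule: exp_sums.induct)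
  case (exp_sums_exp v)
  show ?case
  proof (cases "v = 0")
    case True
    then show ?thesis
      by (simp add: sampled_nets.approximable_on_mem sampled_tanh_net_const)
  next
    case False
    then have "norm (v /\<^sub>R norm v) = 1"
      by simp
    then have "sampled_nets.approximable_on X X (\<lambda>x. exp (norm v * ((v /\<^sub>R norm v) \<bullet> x)))"
      unfolding X_def using assms(2-4)
      by (intro sampled_tanh_net_ridge_approximation continuous_intros) auto
    moreover have "(\<lambda>x. exp (norm v * ((v /\<^sub>R norm v) \<bullet> x))) = (\<lambda>x. exp (v \<bullet> x))"
      using False by (simp add: fun_eq_iff)
    ultimately show ?thesis
      by simp
  qed
next
  case (exp_sums_add f g)
  then show ?case
    by (intro sampled_nets.approximable_on_add)
next
  case (exp_sums_scale f c)
  then show ?case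
    by (intro sampled_nets.approximable_on_scale)
qed

lemma sampled_tanh_net_approximable_continuous:
  fixes X' :: "'a::euclidean_space set" and eps :: real
  defines "X \<equiv> {x. infdist x X' \<le> eps}"
  assumes "compact X'" "X' \<noteq> {}" "0 < eps" "continuous_on X g"
  shows "sampled_nets.approximable_on X X g"
proof (rule sampled_nets.approximable_on_uniform_limit)
  fix \<epsilon> :: real
  assume "0 < \<epsilon>"
  moreover have "compact X"
    unfolding X_def by (rule compact_infdist_le[OF assms(3,2,4)])
  ultimately obtain f where "f \<in> exp_sums" "\<forall>x\<in>X. \<bar>g x - f x\<bar> < \<epsilon>"
    using exp_sums_dense assms(5) by blast
  then show "\<exists>f. sampled_nets.approximable_on X X f \<and> (\<forall>x\<in>X. \<bar>f x - g x\<bar> < \<epsilon>)"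
    using sampled_tanh_net_approximable_exp_sums[OF assms(2-4)] unfolding X_def
    by (force simp: abs_minus_commute)
qed

lemma sampled_tanh_net_approximation_componentwise:
  fixes f :: "'a::euclidean_space \<Rightarrow> 'b::euclidean_space"
  assumes "\<And>b. b \<in> Basis \<Longrightarrow> sampled_nets.approximable_on X X (\<lambda>x. f x \<bullet> b)" and "0 < \<epsilon>"
  shows "\<exists>\<Psi>. sampled_tanh_net X \<Psi> \<and> (\<forall>x\<in>X. norm (f x - \<Psi> x) < \<epsilon>)"
proof -
  define e where "e = \<epsilon> / real DIM('b)"
  have "0 < e"
    using assms(2) by (simp add: e_def)
  then have "\<forall>b\<in>Basis. \<exists>\<Psi>. sampled_tanh_net X \<Psi> \<and> (\<forall>x\<in>X. \<bar>\<Psi> x - f x \<bullet> b\<bar> < e)"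
    using assms(1) unfolding sampled_nets.approximable_on_def by blast
  then obtain \<Psi> where net: "\<And>b. b \<in> Basis \<Longrightarrow> sampled_tanh_net X (\<Psi> b)"
    and close: "\<And>b x. b \<in> Basis \<Longrightarrow> x \<in> X \<Longrightarrow> \<bar>\<Psi> b x - f x \<bullet> b\<bar> < e"
    by metis
  define \<Phi> where "\<Phi> x = (\<Sum>b\<in>Basis. \<Psi> b x *\<^sub>R b)" for x
  have "sampled_tanh_net X \<Phi>"
    unfolding \<Phi>_def[abs_def] by (intro sampled_tanh_net_sum sampled_tanh_net_scaleR_vector net) auto
  moreover have "norm (f x - \<Phi> x) < \<epsilon>" if "x \<in> X" for x
  proof -
    have "f x - \<Phi> x = (\<Sum>b\<in>Basis. (f x \<bullet> b - \<Psi> b x) *\<^sub>R b)"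
      unfolding \<Phi>_def scaleR_diff_left sum_subtractf euclidean_representation ..
    then have "norm (f x - \<Phi> x) \<le> (\<Sum>b\<in>Basis. \<bar>\<Psi> b x - f x \<bullet> b\<bar>)"
      using norm_sum[of "\<lambda>b. (f x \<bullet> b - \<Psi> b x) *\<^sub>R b" Basis] by (simp add: abs_minus_commute)
    also have "\<dots> < (\<Sum>b\<in>(Basis :: 'b set). e)"
      using close that by (intro sum_strict_mono) auto
    also have "\<dots> = \<epsilon>"
      by (simp add: e_def)
    finally show ?thesis .
  qed
  ultimately show ?thesis
    by blast
qed

theorem theorem6:
  fixes X' :: "'a::euclidean_space set" and eps_I :: real
    and f :: "'a \<Rightarrow> 'b::euclidean_space" and \<epsilon> :: real
  assumes "compact X'" and "X' \<noteq> {}" and "reach X' > 0"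
    and "0 < eps_I" and "ereal eps_I < reach X'" and "eps_I < 1"
    and "continuous_on {x. infdist x X' \<le> eps_I} f"
    and "\<epsilon> > 0"
  shows "\<exists>Psi. sampled_tanh_net {x. infdist x X' \<le> eps_I} Psi \<and>
           (\<forall>x\<in>{x. infdist x X' \<le> eps_I}. norm (f x - Psi x) < \<epsilon>)"
proof -
  have "sampled_nets.approximable_on {x. infdist x X' \<le> eps_I} {x. infdist x X' \<le> eps_I} (\<lambda>x. f x \<bullet> b)"
    for b
    using assms(1,2,4) by (intro sampled_tanh_net_approximable_continuous continuous_intros assms(7))
  then show ?thesis
    using sampled_tanh_net_approximation_componentwise assms(8) by blast
qed

end
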